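(* Let $x_1,\dots,x_N \in [-1,1]^d$ with labels $y_1,\dots,y_N \in \{-1,1\}$, let $\lambda > 0$, and let $F(\beta) = \frac{1}{N}\sum_{i=1}^N \max(0, 1 - y_i \beta\cdot x_i) + \lambda\|\beta\|_2^2$, with $\beta^* = \arg\min_{\beta\in\mathbb{R}^d} F(\beta)$. Let $\mathcal K$ be the ball of radius $\frac{\sqrt d}{2\lambda}$ centered at the origin. Starting from $\beta^{(0)} = 0$, perform projected gradient descent $\beta^{(t)} = \Pi_{\mathcal K}(\beta^{(t-1)} - \eta_t \nabla F(\beta^{(t-1)}))$ with $\eta_t = \frac{1}{8\lambda\sqrt{dt}}$, and let $\widehat\beta_s = \frac{1}{s}\sum_{t=0}^{s-1}\beta^{(t)}$. Then after $T-1$ iterations, $$F(\widehat\beta_T) - F(\beta^* ) \le \frac{4 d^{3/2}}{\lambda\sqrt T}.$$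
   Context: $\Pi_{\mathcal K}(\alpha) = \arg\min_{\beta\in\mathcal K}\|\alpha-\beta\|_2$. The gradient used is $\nabla F(\beta) = 2\lambda\beta - \frac{1}{N}\sum_{i:\ y_i\beta\cdot x_i \le 1} y_i x_i$ (the subgradient that counts points lying exactly on the hinge). *)

theory Defs
  imports "HOL-Analysis.Analysis"
begin

definition svm_obj :: "nat \<Rightarrow> (nat \<Rightarrow> real^'d) \<Rightarrow> (nat \<Rightarrow> real) \<Rightarrow> real \<Rightarrow> real^'d \<Rightarrow> real" where
  "svm_obj N x y lam \<beta> =
     (1 / real N) * (\<Sum>i<N. max 0 (1 - y i * (\<beta> \<bullet> x i))) + lam * (norm \<beta>)\<^sup>2"

definition svm_grad :: "nat \<Rightarrow> (nat \<Rightarrow> real^'d) \<Rightarrow> (nat \<Rightarrow> real) \<Rightarrow> real \<Rightarrow> real^'d \<Rightarrow> real^'d" where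
  "svm_grad N x y lam \<beta> =
     (2 * lam) *\<^sub>R \<beta> - (1 / real N) *\<^sub>R (\<Sum>i\<in>{i. i < N \<and> y i * (\<beta> \<bullet> x i) \<le> 1}. y i *\<^sub>R x i)"

definition svm_ball :: "real \<Rightarrow> (real^'d) set" where
  "svm_ball lam = cball 0 (sqrt (real CARD('d)) / (2 * lam))"

definition svm_step :: "real \<Rightarrow> nat \<Rightarrow> nat \<Rightarrow> real" where
  "svm_step lam d t = 1 / (8 * lam * sqrt (real d * real t))"

primrec svm_pgd :: "nat \<Rightarrow> (nat \<Rightarrow> real^'d) \<Rightarrow> (nat \<Rightarrow> real) \<Rightarrow> real \<Rightarrow> nat \<Rightarrow> real^'d" where
  "svm_pgd N x y lam 0 = 0"
| "svm_pgd N x y lam (Suc t) =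
     closest_point (svm_ball lam)
       (svm_pgd N x y lam t - svm_step lam CARD('d) (Suc t) *\<^sub>R svm_grad N x y lam (svm_pgd N x y lam t))"

definition svm_avg :: "nat \<Rightarrow> (nat \<Rightarrow> real^'d) \<Rightarrow> (nat \<Rightarrow> real) \<Rightarrow> real \<Rightarrow> nat \<Rightarrow> real^'d" where
  "svm_avg N x y lam s = (1 / real s) *\<^sub>R (\<Sum>t<s. svm_pgd N x y lam t)"

end

theory Submission
  imports Defs
begin

text \<open>
  The objective F is a convex hinge risk plus lam |beta|^2, so svm_grad is a subgradient with the
  strong-convexity bonus F b + g . (b' - b) + lam |b' - b|^2 <= F b'. Shrinking any beta radially
  onto K never increases F, so it suffices to compare with a point u of K. Non-expansiveness of
  the projection gives the one-step bound
    F b_t - F u <= c_(t+1) (D_t - D_(t+1)) - lam D_t + eta_(t+1) |g|^2 / 2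
  with D_t = |b_t - u|^2 <= d / lam^2 and c_t = 1 / (2 eta_t) = 4 lam sqrt (d t). When telescoping,
  each gradient term is paid either by the strong-convexity term (if c_(t+1) - c_t >= lam) or by
  the growth of the weights, since sqrt (t + 1) - sqrt t >= 1 / (2 sqrt (t + 1)). Hence the regret
  after T steps is at most (d / lam^2) c_T = 4 d^(3/2) sqrt T / lam, and Jensen's inequality passes
  this to the averaged iterate.
\<close>

lemma projected_subgradient_step:
  fixes F :: "'a::{real_inner,heine_borel} \<Rightarrow> real"
  assumes K: "convex K" "closed K" "K \<noteq> {}" and u: "u \<in> K" and \<eta>: "0 < \<eta>"
    and subgradient: "F b + g \<bullet> (u - b) + \<mu> * (norm (u - b))\<^sup>2 \<le> F u"
  shows "F b - F u \<le> ((norm (b - u))\<^sup>2 - (norm (closest_point K (b - \<eta> *\<^sub>R g) - u))\<^sup>2) / (2 * \<eta>)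
           - \<mu> * (norm (b - u))\<^sup>2 + \<eta> * (norm g)\<^sup>2 / 2"
proof -
  define b' where "b' = closest_point K (b - \<eta> *\<^sub>R g)"
  have "norm (b' - u) \<le> norm ((b - u) - \<eta> *\<^sub>R g)"
    using closest_point_lipschitz[OF K, of "b - \<eta> *\<^sub>R g" u] closest_point_self[OF u]
    by (simp add: b'_def dist_norm algebra_simps)
  then have "(norm (b' - u))\<^sup>2 \<le> (norm ((b - u) - \<eta> *\<^sub>R g))\<^sup>2"
    by (simp add: power_mono)
  also have "\<dots> = (norm (b - u))\<^sup>2 - 2 * \<eta> * (g \<bullet> (b - u)) + \<eta>\<^sup>2 * (norm g)\<^sup>2"
    unfolding power2_norm_eq_inner by (simp add: inner_commute algebra_simps power2_eq_square)
  finally have "g \<bullet> (b - u) \<le> ((norm (b - u))\<^sup>2 - (norm (b' - u))\<^sup>2) / (2 * \<eta>) + \<eta> * (norm g)\<^sup>2 / 2"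
    using \<eta> by (simp add: field_simps power2_eq_square)
  moreover have "F b - g \<bullet> (b - u) + \<mu> * (norm (b - u))\<^sup>2 \<le> F u"
    using subgradient by (simp add: inner_diff_right norm_minus_commute)
  ultimately show ?thesis
    unfolding b'_def by linarith
qed

lemma weighted_telescoping_sum_le:
  fixes a c D e :: "nat \<Rightarrow> real"
  assumes step: "\<And>t. a t \<le> c (Suc t) * (D t - D (Suc t)) - \<mu> * D t + e t"
    and D: "\<And>t. 0 \<le> D t" "\<And>t. D t \<le> M"
    and e: "\<And>t. e t \<le> M * (c (Suc t) - c t)" "\<And>t. e t \<le> M * \<mu>"
    and c0: "c 0 = 0"
  shows "(\<Sum>t<n. a t) + c n * D n \<le> M * c n"
proof (induction n)
  case 0
  then show ?case using c0 by simp
next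
  case (Suc n)
  \<comment> \<open>The left side is affine in D n, so it suffices to check D n = 0 and D n = M.\<close>
  have "D n * (c (Suc n) - c n - \<mu>) + e n \<le> M * (c (Suc n) - c n)"
  proof (cases "\<mu> \<le> c (Suc n) - c n")
    case True
    then have "D n * (c (Suc n) - c n - \<mu>) \<le> M * (c (Suc n) - c n - \<mu>)"
      using D(2) by (intro mult_right_mono) auto
    then show ?thesis using e(2)[of n] by (simp add: algebra_simps)
  next
    case False
    then have "D n * (c (Suc n) - c n - \<mu>) \<le> 0"
      using D(1)[of n] by (simp add: mult_nonneg_nonpos)
    then show ?thesis using e(1)[of n] by linarith
  qed
  then show ?case using Suc.IH step[of n] by (simp add: algebra_simps)
qed

lemma subgradient_jensen_sum:
  fixes F :: "'a::real_inner \<Rightarrow> real"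
  assumes subgradient: "\<And>z. F a + g \<bullet> (z - a) \<le> F z" and a: "real n *\<^sub>R a = (\<Sum>t<n. p t)"
  shows "real n * F a \<le> (\<Sum>t<n. F (p t))"
proof -
  have "(\<Sum>t<n. F a + g \<bullet> (p t - a)) \<le> (\<Sum>t<n. F (p t))"
    using subgradient by (intro sum_mono)
  moreover have "(\<Sum>t<n. F a + g \<bullet> (p t - a)) = real n * F a + g \<bullet> ((\<Sum>t<n. p t) - real n *\<^sub>R a)"
    by (simp add: sum.distrib inner_sum_right inner_diff_right sum_subtractf)
  ultimately show ?thesis using a by simp
qed

lemma inverse_two_sqrt_le_sqrt_diff:
  fixes t :: real
  assumes "0 \<le> t"
  shows "1 / (2 * sqrt (t + 1)) \<le> sqrt (t + 1) - sqrt t"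
proof -
  have "sqrt t * sqrt (t + 1) = sqrt (t * (t + 1))"
    by (simp add: real_sqrt_mult)
  also have "\<dots> \<le> sqrt ((t + 1/2)\<^sup>2)"
    by (rule real_sqrt_le_mono) (simp add: power2_eq_square algebra_simps)
  also have "\<dots> = t + 1/2"
    using assms by simp
  finally have "1/2 \<le> sqrt (t + 1) * (sqrt (t + 1) - sqrt t)"
    using assms by (simp add: algebra_simps)
  moreover have "0 < sqrt (t + 1)"
    using assms by simp
  ultimately show ?thesis
    by (simp add: field_simps)
qed

lemma norm_le_sqrt_CARD:
  fixes v :: "real^'d"
  assumes "\<And>j. \<bar>v $ j\<bar> \<le> 1"
  shows "norm v \<le> sqrt (real CARD('d))"
proof -
  have "(norm v)\<^sup>2 = (\<Sum>j\<in>UNIV. (v $ j)\<^sup>2)"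
    unfolding power2_norm_eq_inner by (simp add: inner_vec_def power2_eq_square)
  also have "\<dots> \<le> (\<Sum>j\<in>(UNIV::'d set). 1)"
    using assms by (intro sum_mono) (simp add: abs_le_square_iff[of _ 1, simplified])
  finally show ?thesis
    by (simp add: real_le_rsqrt)
qed

definition hinge_risk :: "nat \<Rightarrow> (nat \<Rightarrow> real^'d) \<Rightarrow> (nat \<Rightarrow> real) \<Rightarrow> real^'d \<Rightarrow> real" where
  "hinge_risk N x y \<beta> = (1 / real N) * (\<Sum>i<N. max 0 (1 - y i * (\<beta> \<bullet> x i)))"

lemma svm_obj_eq_hinge_risk: "svm_obj N x y lam \<beta> = hinge_risk N x y \<beta> + lam * (norm \<beta>)\<^sup>2"
  by (simp add: svm_obj_def hinge_risk_def)

lemma hinge_risk_lipschitz: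
  fixes x :: "nat \<Rightarrow> real^'d"
  assumes x: "\<forall>i<N. \<forall>j. \<bar>x i $ j\<bar> \<le> 1" and y: "\<forall>i<N. y i \<in> {-1, 1}"
  shows "hinge_risk N x y \<beta>' \<le> hinge_risk N x y \<beta> + sqrt (real CARD('d)) * norm (\<beta>' - \<beta>)"
proof -
  define L where "L = sqrt (real CARD('d)) * norm (\<beta>' - \<beta>)"
  have "max 0 (1 - y i * (\<beta>' \<bullet> x i)) \<le> max 0 (1 - y i * (\<beta> \<bullet> x i)) + L" if "i < N" for i
  proof -
    have "\<bar>y i * ((\<beta>' - \<beta>) \<bullet> x i)\<bar> \<le> norm (\<beta>' - \<beta>) * norm (x i)"
      using y that by (auto simp: abs_mult Cauchy_Schwarz_ineq2)
    also have "\<dots> \<le> L"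
      using norm_le_sqrt_CARD[of "x i"] x that by (auto simp: L_def mult.commute intro: mult_right_mono)
    finally show ?thesis
      by (auto simp: algebra_simps)
  qed
  then have "(\<Sum>i<N. max 0 (1 - y i * (\<beta>' \<bullet> x i))) \<le> (\<Sum>i<N. max 0 (1 - y i * (\<beta> \<bullet> x i)) + L)"
    by (intro sum_mono) auto
  moreover have "0 \<le> L"
    by (simp add: L_def)
  ultimately show ?thesis
    unfolding hinge_risk_def L_def[symmetric]
    by (cases "N = 0") (auto simp: sum.distrib field_simps)
qed

lemma ex_svm_ball_obj_le:
  fixes x :: "nat \<Rightarrow> real^'d"
  assumes x: "\<forall>i<N. \<forall>j. \<bar>x i $ j\<bar> \<le> 1" and y: "\<forall>i<N. y i \<in> {-1, 1}" and lam: "0 < lam"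
  shows "\<exists>u\<in>svm_ball lam. svm_obj N x y lam u \<le> svm_obj N x y lam \<beta>"
proof (cases "\<beta> \<in> svm_ball lam")
  case True
  then show ?thesis by blast
next
  case False
  define s where "s = sqrt (real CARD('d))"
  define R where "R = s / (2 * lam)"
  define u where "u = (R / norm \<beta>) *\<^sub>R \<beta>"
  have "0 \<le> R" "R < norm \<beta>"
    using False lam by (auto simp: svm_ball_def R_def s_def)
  have norm_u: "norm u = R"
    using \<open>0 \<le> R\<close> \<open>R < norm \<beta>\<close> by (auto simp: u_def)
  have "\<beta> - u = (1 - R / norm \<beta>) *\<^sub>R \<beta>" "0 \<le> 1 - R / norm \<beta>"
    using \<open>0 \<le> R\<close> \<open>R < norm \<beta>\<close> by (simp_all add: u_def algebra_simps divide_le_eq_1)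
  then have norm_diff: "norm (\<beta> - u) = norm \<beta> - R"
    using \<open>0 \<le> R\<close> \<open>R < norm \<beta>\<close> by (auto simp: left_diff_distrib)
  \<comment> \<open>Radial shrinking costs at most s per unit length in the hinge term, and saves at least
    lam (norm \<beta> + R) \<ge> 2 lam R = s per unit length in the regulariser.\<close>
  have "svm_obj N x y lam u - svm_obj N x y lam \<beta> \<le> s * (norm \<beta> - R) + lam * (R\<^sup>2 - (norm \<beta>)\<^sup>2)"
    using hinge_risk_lipschitz[OF x y, of u \<beta>] norm_u norm_diff
    by (simp add: svm_obj_eq_hinge_risk s_def norm_minus_commute algebra_simps)
  also have "\<dots> = (norm \<beta> - R) * (s - lam * (norm \<beta> + R))"
    by (simp add: power2_eq_square algebra_simps)
  also have "\<dots> \<le> 0"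
    using \<open>0 \<le> R\<close> \<open>R < norm \<beta>\<close> lam unfolding R_def
    by (intro mult_nonneg_nonpos) (auto simp: field_simps)
  finally show ?thesis
    using norm_u lam by (intro bexI[of _ u]) (auto simp: svm_ball_def R_def s_def)
qed

lemma hinge_risk_subgradient:
  "hinge_risk N x y b
     - ((1 / real N) *\<^sub>R (\<Sum>i\<in>{i. i < N \<and> y i * (b \<bullet> x i) \<le> 1}. y i *\<^sub>R x i)) \<bullet> (b' - b)
   \<le> hinge_risk N x y b'"
proof -
  define active where "active i \<longleftrightarrow> y i * (b \<bullet> x i) \<le> 1" for i
  have sum_active: "(\<Sum>i\<in>{i. i < N \<and> active i}. y i *\<^sub>R x i) \<bullet> (b' - b)
        = (\<Sum>i<N. if active i then y i * (x i \<bullet> (b' - b)) else 0)"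
    by (simp add: inner_sum_left sum.If_cases Int_def lessThan_def conj_commute)
  have "(\<Sum>i<N. max 0 (1 - y i * (b \<bullet> x i)))
          - (\<Sum>i<N. if active i then y i * (x i \<bullet> (b' - b)) else 0)
        \<le> (\<Sum>i<N. max 0 (1 - y i * (b' \<bullet> x i)))"
    unfolding sum_subtractf[symmetric]
    by (intro sum_mono) (auto simp: active_def inner_commute algebra_simps)
  then have "((\<Sum>i<N. max 0 (1 - y i * (b \<bullet> x i)))
          - (\<Sum>i<N. if active i then y i * (x i \<bullet> (b' - b)) else 0)) / real N
        \<le> (\<Sum>i<N. max 0 (1 - y i * (b' \<bullet> x i))) / real N"
    by (rule divide_right_mono) simp
  then show ?thesis
    unfolding active_def[symmetric]
    by (simp add: hinge_risk_def sum_active diff_divide_distrib)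
qed

lemma svm_obj_strong_subgradient:
  "svm_obj N x y lam b + svm_grad N x y lam b \<bullet> (b' - b) + lam * (norm (b' - b))\<^sup>2
     \<le> svm_obj N x y lam b'"
proof -
  have "lam * (norm b')\<^sup>2 = lam * (norm b)\<^sup>2 + 2 * lam * (b \<bullet> (b' - b)) + lam * (norm (b' - b))\<^sup>2"
    unfolding power2_norm_eq_inner by (simp add: inner_commute algebra_simps)
  moreover have "svm_grad N x y lam b \<bullet> (b' - b) = 2 * lam * (b \<bullet> (b' - b))
      - ((1 / real N) *\<^sub>R (\<Sum>i\<in>{i. i < N \<and> y i * (b \<bullet> x i) \<le> 1}. y i *\<^sub>R x i)) \<bullet> (b' - b)"
    by (simp add: svm_grad_def inner_diff_left)
  ultimately show ?thesis
    using hinge_risk_subgradient[of N x y b b'] unfolding svm_obj_eq_hinge_risk by linarith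
qed

lemma norm_svm_grad_le:
  fixes x :: "nat \<Rightarrow> real^'d"
  assumes x: "\<forall>i<N. \<forall>j. \<bar>x i $ j\<bar> \<le> 1" and y: "\<forall>i<N. y i \<in> {-1, 1}" and lam: "0 \<le> lam"
  shows "norm (svm_grad N x y lam b) \<le> 2 * lam * norm b + sqrt (real CARD('d))"
proof -
  define S where "S = {i. i < N \<and> y i * (b \<bullet> x i) \<le> 1}"
  have "S \<subseteq> {..<N}"
    by (auto simp: S_def)
  then have card_S: "card S \<le> N"
    using card_mono[of "{..<N}" S] by simp
  have "norm (\<Sum>i\<in>S. y i *\<^sub>R x i) \<le> (\<Sum>i\<in>S. norm (y i *\<^sub>R x i))"
    by (rule norm_sum)
  also have "\<dots> \<le> (\<Sum>i\<in>S. sqrt (real CARD('d)))"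
  proof (intro sum_mono)
    fix i
    assume "i \<in> S"
    then have "\<bar>y i\<bar> = 1" "norm (x i) \<le> sqrt (real CARD('d))"
      using x y norm_le_sqrt_CARD[of "x i"] by (auto simp: S_def)
    then show "norm (y i *\<^sub>R x i) \<le> sqrt (real CARD('d))"
      by simp
  qed
  also have "\<dots> \<le> real N * sqrt (real CARD('d))"
    using card_S by (simp add: mult_right_mono)
  finally have "norm ((1 / real N) *\<^sub>R (\<Sum>i\<in>S. y i *\<^sub>R x i)) \<le> sqrt (real CARD('d))"
    by (cases "N = 0") (simp_all add: field_simps)
  then show ?thesis
    using norm_triangle_ineq4[of "(2 * lam) *\<^sub>R b" "(1 / real N) *\<^sub>R (\<Sum>i\<in>S. y i *\<^sub>R x i)"] lam
    by (simp add: svm_grad_def S_def[symmetric])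
qed

lemma svm_ball_closed_convex: "closed (svm_ball lam)" "convex (svm_ball lam)"
  by (simp_all add: svm_ball_def)

lemma zero_in_svm_ball: "0 \<le> lam \<Longrightarrow> 0 \<in> svm_ball lam"
  by (simp add: svm_ball_def)

lemma svm_pgd_in_svm_ball:
  assumes "0 \<le> lam"
  shows "svm_pgd N x y lam t \<in> svm_ball lam"
  using zero_in_svm_ball[OF assms]
  by (cases t) (auto intro!: closest_point_in_set simp: svm_ball_closed_convex)

lemma svm_step_gradient_term_le:
  fixes d :: nat
  assumes lam: "0 < lam" and d: "1 \<le> d" and G: "G2 \<le> 4 * real d"
  shows "svm_step lam d (Suc t) * G2 / 2
           \<le> real d / lam\<^sup>2 * (4 * lam * sqrt (real d * real (Suc t)) - 4 * lam * sqrt (real d * real t))"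
    and "svm_step lam d (Suc t) * G2 / 2 \<le> real d / lam\<^sup>2 * lam"
proof -
  define s where "s = sqrt (real d)"
  define p where "p = sqrt (real t + 1)"
  have s: "1 \<le> s" "s * s = real d"
    using d by (simp_all add: s_def)
  have p: "1 \<le> p"
    by (simp add: p_def)
  have sp: "sqrt (real d * real (Suc t)) = s * p"
    by (simp add: s_def p_def real_sqrt_mult add.commute)
  have sq: "sqrt (real d * real t) = s * sqrt (real t)"
    by (simp add: s_def real_sqrt_mult)
  have "svm_step lam d (Suc t) * G2 / 2 \<le> svm_step lam d (Suc t) * (4 * real d) / 2"
    using G lam by (intro divide_right_mono mult_left_mono) (simp_all add: svm_step_def)
  also have "\<dots> = s / (4 * lam * p)"
    unfolding svm_step_def sp using s p lam by (simp add: field_simps flip: s(2))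
  finally have error: "svm_step lam d (Suc t) * G2 / 2 \<le> s / (4 * lam * p)" .
  have "s / (4 * lam * p) \<le> 4 * (s * s * s) / lam * (1 / (2 * p))"
    using s p lam d by (simp add: field_simps)
  also have "\<dots> \<le> 4 * (s * s * s) / lam * (p - sqrt (real t))"
    using inverse_two_sqrt_le_sqrt_diff[of "real t"] s lam
    by (intro mult_left_mono) (simp_all add: p_def add.commute)
  also have "\<dots> = real d / lam\<^sup>2 * (4 * lam * sqrt (real d * real (Suc t)) - 4 * lam * sqrt (real d * real t))"
    unfolding sp sq using s lam by (simp add: power2_eq_square field_simps flip: s(2))
  finally show "svm_step lam d (Suc t) * G2 / 2
           \<le> real d / lam\<^sup>2 * (4 * lam * sqrt (real d * real (Suc t)) - 4 * lam * sqrt (real d * real t))"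
    using error by linarith
  have "s \<le> s * s" "s * s \<le> s * s * (4 * p)"
    using mult_left_mono[of 1 s s] mult_left_mono[of 1 "4 * p" "s * s"] s(1) p by simp_all
  then have "s / (4 * lam * p) \<le> s * s / lam"
    using p lam by (simp add: field_simps)
  then show "svm_step lam d (Suc t) * G2 / 2 \<le> real d / lam\<^sup>2 * lam"
    using error s lam by (simp add: power2_eq_square)
qed

lemma norm_diff_svm_ball_sq_le:
  fixes b u :: "real^'d"
  assumes lam: "0 < lam" and "b \<in> svm_ball lam" "u \<in> svm_ball lam"
  shows "(norm (b - u))\<^sup>2 \<le> real CARD('d) / lam\<^sup>2"
proof -
  have "norm (b - u) \<le> 2 * (sqrt (real CARD('d)) / (2 * lam))"
    using assms norm_triangle_ineq4[of b u] by (simp add: svm_ball_def)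
  then have "norm (b - u) \<le> sqrt (real CARD('d)) / lam"
    using lam by simp
  then have "(norm (b - u))\<^sup>2 \<le> (sqrt (real CARD('d)) / lam)\<^sup>2"
    by (rule power_mono) simp
  then show ?thesis
    by (simp add: power_divide)
qed

lemma norm_svm_grad_sq_le:
  fixes x :: "nat \<Rightarrow> real^'d"
  assumes x: "\<forall>i<N. \<forall>j. \<bar>x i $ j\<bar> \<le> 1" and y: "\<forall>i<N. y i \<in> {-1, 1}" and lam: "0 < lam"
    and b: "b \<in> svm_ball lam"
  shows "(norm (svm_grad N x y lam b))\<^sup>2 \<le> 4 * real CARD('d)"
proof -
  have "2 * lam * norm b \<le> sqrt (real CARD('d))"
    using b lam by (simp add: svm_ball_def field_simps)
  then have "norm (svm_grad N x y lam b) \<le> 2 * sqrt (real CARD('d))"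
    using norm_svm_grad_le[OF x y, of lam b] lam by simp
  then have "(norm (svm_grad N x y lam b))\<^sup>2 \<le> (2 * sqrt (real CARD('d)))\<^sup>2"
    by (rule power_mono) simp
  then show ?thesis
    by (simp add: power_mult_distrib)
qed

lemma svm_pgd_step_le:
  fixes x :: "nat \<Rightarrow> real^'d" and y :: "nat \<Rightarrow> real" and N :: nat and lam :: real
  defines "b \<equiv> svm_pgd N x y lam"
  assumes lam: "0 < lam" and u: "u \<in> svm_ball lam"
  shows "svm_obj N x y lam (b t) - svm_obj N x y lam u
           \<le> 4 * lam * sqrt (real CARD('d) * real (Suc t)) * ((norm (b t - u))\<^sup>2 - (norm (b (Suc t) - u))\<^sup>2)
             - lam * (norm (b t - u))\<^sup>2
             + svm_step lam CARD('d) (Suc t) * (norm (svm_grad N x y lam (b t)))\<^sup>2 / 2"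
proof -
  define \<eta> where "\<eta> = svm_step lam CARD('d) (Suc t)"
  have "0 < \<eta>"
    using lam by (simp add: \<eta>_def svm_step_def)
  moreover have "b (Suc t) = closest_point (svm_ball lam) (b t - \<eta> *\<^sub>R svm_grad N x y lam (b t))"
    by (simp add: b_def \<eta>_def)
  moreover have "X / (2 * \<eta>) = 4 * lam * sqrt (real CARD('d) * real (Suc t)) * X" for X
    by (simp add: \<eta>_def svm_step_def)
  ultimately show ?thesis
    using projected_subgradient_step[OF svm_ball_closed_convex(2,1) _ u,
        of \<eta> "svm_obj N x y lam" "b t" "svm_grad N x y lam (b t)" lam]
      svm_obj_strong_subgradient[of N x y lam "b t" u] u
    unfolding \<eta>_def by auto
qed

lemma svm_pgd_regret:
  fixes x :: "nat \<Rightarrow> real^'d"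
  assumes x: "\<forall>i<N. \<forall>j. \<bar>x i $ j\<bar> \<le> 1" and y: "\<forall>i<N. y i \<in> {-1, 1}" and lam: "0 < lam"
    and u: "u \<in> svm_ball lam"
  shows "(\<Sum>t<T. svm_obj N x y lam (svm_pgd N x y lam t) - svm_obj N x y lam u)
           \<le> 4 * real CARD('d) powr (3/2) * sqrt (real T) / lam"
proof -
  define b where "b = svm_pgd N x y lam"
  define D where "D t = (norm (b t - u))\<^sup>2" for t
  define c where "c t = 4 * lam * sqrt (real CARD('d) * real t)" for t
  define M where "M = real CARD('d) / lam\<^sup>2"
  define e where "e t = svm_step lam CARD('d) (Suc t) * (norm (svm_grad N x y lam (b t)))\<^sup>2 / 2" for t
  have d: "1 \<le> CARD('d)"
    by (simp add: Suc_le_eq)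
  have b: "b t \<in> svm_ball lam" for t
    using svm_pgd_in_svm_ball[of lam] lam by (simp add: b_def)
  have "(\<Sum>t<T. svm_obj N x y lam (b t) - svm_obj N x y lam u) + c T * D T \<le> M * c T"
  proof (rule weighted_telescoping_sum_le[where e = e])
    fix t
    show "svm_obj N x y lam (b t) - svm_obj N x y lam u \<le> c (Suc t) * (D t - D (Suc t)) - lam * D t + e t"
      using svm_pgd_step_le[OF lam u] by (simp add: b_def c_def D_def e_def)
    show "0 \<le> D t" "D t \<le> M"
      using norm_diff_svm_ball_sq_le[OF lam b u] by (simp_all add: D_def M_def)
    show "e t \<le> M * (c (Suc t) - c t)" "e t \<le> M * lam"
      using svm_step_gradient_term_le[OF lam d norm_svm_grad_sq_le[OF x y lam b]]
      by (simp_all add: e_def M_def c_def)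
  qed (simp add: c_def)
  moreover have "0 \<le> c T * D T"
    using lam by (simp add: c_def D_def)
  moreover have "M * c T = 4 * real CARD('d) powr (3/2) * sqrt (real T) / lam"
    using lam d
    by (simp add: M_def c_def real_sqrt_mult powr_half_sqrt[symmetric] powr_mult_base power2_eq_square)
  ultimately show ?thesis
    by (simp add: b_def)
qed

lemma svm_avg_obj_le:
  fixes x :: "nat \<Rightarrow> real^'d" and y :: "nat \<Rightarrow> real" and N T :: nat and lam :: real
  defines "avg \<equiv> svm_avg N x y lam T"
  assumes "1 \<le> T" and "0 \<le> lam"
  shows "real T * svm_obj N x y lam avg \<le> (\<Sum>t<T. svm_obj N x y lam (svm_pgd N x y lam t))"
proof (rule subgradient_jensen_sum[where g = "svm_grad N x y lam avg"])
  fix z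
  have "0 \<le> lam * (norm (z - avg))\<^sup>2"
    using assms(3) by simp
  then show "svm_obj N x y lam avg + svm_grad N x y lam avg \<bullet> (z - avg) \<le> svm_obj N x y lam z"
    using svm_obj_strong_subgradient[of N x y lam avg z] by linarith
  show "real T *\<^sub>R avg = (\<Sum>t<T. svm_pgd N x y lam t)"
    using assms(2) by (simp add: avg_def svm_avg_def)
qed

theorem theorem6:
  fixes x :: "nat \<Rightarrow> real^'d" and y :: "nat \<Rightarrow> real" and lam :: real
    and N T :: nat and \<beta>star :: "real^'d"
  assumes "N \<ge> 1"
    and "\<forall>i<N. \<forall>j. \<bar>x i $ j\<bar> \<le> 1"
    and "\<forall>i<N. y i \<in> {-1, 1}"
    and "lam > 0"
    and "\<forall>\<beta>. svm_obj N x y lam \<beta>star \<le> svm_obj N x y lam \<beta>"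
    and "T \<ge> 1"
  shows "svm_obj N x y lam (svm_avg N x y lam T) - svm_obj N x y lam \<beta>star
           \<le> 4 * real CARD('d) powr (3/2) / (lam * sqrt (real T))"
proof -
  note x = assms(2) and y = assms(3) and lam = assms(4)
  let ?F = "svm_obj N x y lam"
  define avg where "avg = svm_avg N x y lam T"
  define C where "C = 4 * real CARD('d) powr (3/2)"
  obtain u where u: "u \<in> svm_ball lam" "?F u \<le> ?F \<beta>star"
    using ex_svm_ball_obj_le[OF x y lam] by blast
  have "real T * (?F avg - ?F u) \<le> sqrt (real T) * (C / lam)"
    using svm_avg_obj_le[OF assms(6), of lam N x y] svm_pgd_regret[OF x y lam u(1), of T] lam
    by (simp add: avg_def C_def sum_subtractf algebra_simps)
  then have "sqrt (real T) * (sqrt (real T) * (?F avg - ?F u)) \<le> sqrt (real T) * (C / lam)"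
    by (simp add: mult.assoc[symmetric])
  then have "sqrt (real T) * (?F avg - ?F u) \<le> C / lam"
    by (rule mult_left_le_imp_le) (use assms(6) in simp)
  then have "?F avg - ?F u \<le> C / (lam * sqrt (real T))"
    using assms(6) lam by (simp add: field_simps)
  then show ?thesis
    using u(2) by (simp add: avg_def C_def)
qed

end
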